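(* Let $q\neq-1$ be real and $n\ge0$. Then $$U_{2n+1}(x,s,q)=\sum_{k=0}^{n}\begin{bmatrix} 2n+2\\ 2k\end{bmatrix}\frac{1}{[2k+1]}(-q;q)_{2n-2k+1}(-1)^{n-k}G_{2n-2k+2}(q)\,x^{2n+1-2k}\,U_{2k}(x,s,q).$$
   Context: $U_{-1}=0$, $U_0=1$, $U_n(x,s,q)=(1+q^{n})x\,U_{n-1}(x,s,q)+q^{n-1}s\,U_{n-2}(x,s,q)$ for $n\ge1$. Notation: $[m]=1+q+\cdots+q^{m-1}$, $[m]!=[1]\cdots[m]$, $\begin{bmatrix} m\\ j\end{bmatrix}=\frac{[m]!}{[j]![m-j]!}$; $(a;q)_m=(1-a)(1-aq)\cdots(1-aq^{m-1})$, so $(-q;q)_m=(1+q)\cdots(1+q^m)$. With $e(z)=\sum_{m\ge0}z^m/[m]!$, the $q$-Genocchi numbers $G_{2m}(q)$, $m\ge1$, are defined by the formal power series identity $z\frac{e(z)-e(-z)}{e(z)+e(-z)}=\sum_{m\ge1}\frac{(-1)^{m-1}G_{2m}(q)(-q;q)_{2m-1}}{[2m]!}z^{2m}$. *)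

theory Defs
  imports Complex_Main "HOL-Computational_Algebra.Formal_Power_Series"
begin

text \<open>The sequence U_n(x,s,q), shifted so that U_{-1} = 0 is built in:
  U_0 = 1, U_1 = (1+q) x U_0 + s U_{-1} = (1+q) x,
  U_{n+2} = (1+q^{n+2}) x U_{n+1} + q^{n+1} s U_n.\<close>
fun U :: "nat \<Rightarrow> real \<Rightarrow> real \<Rightarrow> real \<Rightarrow> real" where
  "U 0 x s q = 1"
| "U (Suc 0) x s q = (1 + q) * x * 1 + s * 0"
| "U (Suc (Suc n)) x s q =
     (1 + q ^ (n + 2)) * x * U (Suc n) x s q + q ^ (n + 1) * s * U n x s q"

definition qint :: "real \<Rightarrow> nat \<Rightarrow> real" where
  "qint q m = (\<Sum>i<m. q ^ i)"

definition qfact :: "real \<Rightarrow> nat \<Rightarrow> real" where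
  "qfact q m = (\<Prod>i=1..m. qint q i)"

definition qbinom :: "real \<Rightarrow> nat \<Rightarrow> nat \<Rightarrow> real" where
  "qbinom q m j = qfact q m / (qfact q j * qfact q (m - j))"

definition qpoch :: "real \<Rightarrow> real \<Rightarrow> nat \<Rightarrow> real" where
  "qpoch a q m = (\<Prod>i<m. (1 - a * q ^ i))"

definition qexp_fps :: "real \<Rightarrow> real fps" where
  "qexp_fps q = Abs_fps (\<lambda>m. 1 / qfact q m)"

definition qexp_neg_fps :: "real \<Rightarrow> real fps" where
  "qexp_neg_fps q = Abs_fps (\<lambda>m. (-1) ^ m / qfact q m)"

definition qgen_fps :: "real \<Rightarrow> real fps" where
  "qgen_fps q = fps_X * (qexp_fps q - qexp_neg_fps q) * inverse (qexp_fps q + qexp_neg_fps q)"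

text \<open>q-Genocchi number G_j(q) for even j = 2m, m >= 1: the unique g with
  [z^(2m)] qgen_fps = (-1)^(m-1) g (-q;q)_(2m-1) / [2m]!.\<close>
definition qgenocchi :: "real \<Rightarrow> nat \<Rightarrow> real" where
  "qgenocchi q j = (THE g. fps_nth (qgen_fps q) j =
       (-1) ^ (j div 2 - 1) * g * qpoch (-q) q (j - 1) / qfact q j)"

end

theory Submission
  imports Defs
begin

unbundle fps_syntax

text \<open>
  Let V(z) = sum_n U_n z^(n+1) / [n+1]!. The recurrence of U is a second order q-difference
  equation for V, and V(z) = O(z) E(xz) solves it, where O is odd and E(z) = sum_n q^(n choose 2)
  z^n / [n]! is the q-exponential with e(z) E(-z) = 1. Hence
  (e(xz) - e(-xz)) / (e(xz) + e(-xz)) = (E(xz) - E(-xz)) / (E(xz) + E(-xz)), and as O is odd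
  this equals (V(z) + V(-z)) / (V(z) - V(-z)). Clearing denominators in the defining identity of
  the q-Genocchi numbers (taken at xz) and comparing coefficients of z^(2n+3) gives the theorem.
  Over the reals, q \<noteq> -1 is exactly what makes all q-integers [m], m \<ge> 1, nonzero.
\<close>

subsection \<open>\<open>q\<close>-integers and \<open>q\<close>-factorials\<close>

lemma qint_Suc: "qint q (Suc m) = qint q m + q ^ m"
  by (simp add: qint_def)

lemma qint_0 [simp]: "qint q 0 = 0"
  by (simp add: qint_def)

lemma qint_add: "qint q (a + b) = qint q a * q ^ b + qint q b"
  by (induction a) (auto simp: qint_Suc algebra_simps power_add)

lemma one_minus_mult_qint: "(1 - q) * qint q m = 1 - q ^ m"
  by (simp add: qint_def one_diff_power_eq)

lemma power_eq_minus_one_imp: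
  fixes q :: real
  assumes "q ^ m = -1"
  shows "q = -1"
proof -
  have "\<bar>q\<bar> ^ m = 1"
    using assms by (metis abs_neg_one power_abs)
  moreover have "m \<noteq> 0"
    using assms by (cases m) auto
  ultimately have "\<bar>q\<bar> = 1"
    using power_eq_1_iff[of "\<bar>q\<bar>" m] by simp
  then show ?thesis
    using assms by (cases "q \<ge> 0") auto
qed

lemma qint_nonzero:
  assumes "q \<noteq> -1" "m \<noteq> 0"
  shows "qint q m \<noteq> 0"
proof (cases "q = 1")
  case True
  then show ?thesis
    using assms by (simp add: qint_def)
next
  case False
  show ?thesis
  proof
    assume "qint q m = 0"
    then have "q ^ m = 1"
      using one_minus_mult_qint[of q m] by simp
    then have "\<bar>q\<bar> = 1"
      using power_eq_1_iff[of q m] assms(2) by simp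
    then show False
      using False assms(1) by auto
  qed
qed

lemma qfact_Suc: "qfact q (Suc m) = qfact q m * qint q (Suc m)"
  by (simp add: qfact_def)

lemma qfact_0 [simp]: "qfact q 0 = 1"
  by (simp add: qfact_def)

lemma qfact_nonzero: "q \<noteq> -1 \<Longrightarrow> qfact q m \<noteq> 0"
  by (induction m) (auto simp: qfact_Suc qint_nonzero)

lemma qpoch_neg_nonzero:
  assumes "q \<noteq> -1"
  shows "qpoch (-q) q m \<noteq> 0"
proof -
  have "1 + q ^ Suc i \<noteq> 0" for i
    using power_eq_minus_one_imp[of q "Suc i"] assms by (auto simp: add_eq_0_iff)
  then show ?thesis
    by (simp add: qpoch_def)
qed

subsection \<open>Dilation and the \<open>q\<close>-derivative of formal power series\<close>

definition fps_dilate :: "'a::comm_ring_1 \<Rightarrow> 'a fps \<Rightarrow> 'a fps" where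
  "fps_dilate c f = fps_compose f (fps_const c * fps_X)"

definition fps_qderiv :: "real \<Rightarrow> real fps \<Rightarrow> real fps" where
  "fps_qderiv q f = Abs_fps (\<lambda>n. qint q (Suc n) * f $ Suc n)"

lemma fps_dilate_nth [simp]: "fps_dilate c f $ n = c ^ n * f $ n"
  by (simp add: fps_dilate_def)

lemma fps_qderiv_nth [simp]: "fps_qderiv q f $ n = qint q (Suc n) * f $ Suc n"
  by (simp add: fps_qderiv_def)

lemma fps_dilate_mult: "fps_dilate c (f * g) = fps_dilate c f * fps_dilate (c::'a::idom) g"
  by (simp add: fps_dilate_def fps_compose_mult_distrib)

lemma fps_dilate_add: "fps_dilate c (f + g) = fps_dilate c f + fps_dilate c g"
  by (simp add: fps_dilate_def fps_compose_add_distrib)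

lemma fps_dilate_diff: "fps_dilate c (f - g) = fps_dilate c f - fps_dilate (c::'a::comm_ring_1) g"
  by (simp add: fps_dilate_def fps_compose_sub_distrib)

lemma fps_dilate_const [simp]: "fps_dilate c (fps_const a) = fps_const a"
  by (simp add: fps_dilate_def)

lemma fps_dilate_const_mult: "fps_dilate c (fps_const a * f) = fps_const a * fps_dilate c f"
  by (rule fps_ext) simp

lemma fps_dilate_X: "fps_dilate c fps_X = fps_const c * fps_X"
  by (simp add: fps_dilate_def)

lemma fps_dilate_dilate: "fps_dilate a (fps_dilate b f) = fps_dilate (a * b) f"
  by (rule fps_ext) (simp add: power_mult_distrib)

lemma fps_dilate_commute: "fps_dilate a (fps_dilate b f) = fps_dilate b (fps_dilate a f)"
  by (simp add: fps_dilate_dilate mult.commute)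

lemma fps_qderiv_add: "fps_qderiv q (f + g) = fps_qderiv q f + fps_qderiv q g"
  by (rule fps_ext) (simp add: algebra_simps)

lemma fps_qderiv_const_mult: "fps_qderiv q (fps_const a * f) = fps_const a * fps_qderiv q f"
  by (rule fps_ext) simp

lemma fps_qderiv_dilate: "fps_qderiv q (fps_dilate c f) = fps_const c * fps_dilate c (fps_qderiv q f)"
  by (rule fps_ext) simp

lemma fps_qderiv_mult:
  "fps_qderiv q (f * g) = fps_qderiv q f * fps_dilate q g + f * fps_qderiv q g"
proof (rule fps_ext)
  fix n
  let ?t = "\<lambda>i. f $ i * g $ (Suc n - i)"
  have "fps_qderiv q (f * g) $ n = (\<Sum>i=0..Suc n. qint q (Suc n) * ?t i)"
    by (simp only: fps_qderiv_nth fps_mult_nth sum_distrib_left)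
  also have "\<dots> = (\<Sum>i=0..Suc n. qint q i * q ^ (Suc n - i) * ?t i)
                  + (\<Sum>i=0..Suc n. qint q (Suc n - i) * ?t i)"
    unfolding sum.distrib[symmetric]
    by (rule sum.cong, simp) (metis qint_add le_add_diff_inverse atLeastAtMost_iff distrib_right)
  also have "(\<Sum>i=0..Suc n. qint q i * q ^ (Suc n - i) * ?t i)
             = (\<Sum>i=0..n. qint q (Suc i) * q ^ (n - i) * (f $ Suc i * g $ (n - i)))"
    by (subst sum.atLeast0_atMost_Suc_shift) simp
  also have "(\<Sum>i=0..Suc n. qint q (Suc n - i) * ?t i) = (\<Sum>i=0..n. qint q (Suc n - i) * ?t i)"
    by (subst sum.atLeast0_atMost_Suc) simp
  finally show "fps_qderiv q (f * g) $ n = (fps_qderiv q f * fps_dilate q g + f * fps_qderiv q g) $ n"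
    unfolding fps_add_nth fps_mult_nth fps_qderiv_nth fps_dilate_nth
    by (simp add: Suc_diff_le algebra_simps)
qed

lemma fps_sub_dilate_eq_qderiv: "f - fps_dilate q f = fps_const (1 - q) * fps_X * fps_qderiv q f"
proof (rule fps_ext)
  fix n
  show "(f - fps_dilate q f) $ n = (fps_const (1 - q) * fps_X * fps_qderiv q f) $ n"
  proof (cases n)
    case (Suc m)
    have "(1 - q) * (qint q n * f $ n) = (1 - q ^ n) * f $ n"
      by (simp only: mult.assoc[symmetric] one_minus_mult_qint)
    then show ?thesis
      using Suc by (simp add: algebra_simps)
  qed simp
qed

lemma fps_qderiv_eq_0_imp_const:
  assumes "q \<noteq> -1" "fps_qderiv q f = 0"
  shows "f = fps_const (f $ 0)"
proof (rule fps_ext)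
  fix n
  have "f $ Suc m = 0" for m
    using arg_cong[OF assms(2), of "\<lambda>g. g $ m"] qint_nonzero[OF assms(1), of "Suc m"] by simp
  then show "f $ n = fps_const (f $ 0) $ n"
    by (cases n) simp_all
qed

subsection \<open>The \<open>q\<close>-exponentials\<close>

definition qExp_fps :: "real \<Rightarrow> real fps" where
  "qExp_fps q = Abs_fps (\<lambda>n. q ^ (n choose 2) / qfact q n)"

lemma fps_qderiv_qexp:
  assumes "q \<noteq> -1"
  shows "fps_qderiv q (qexp_fps q) = qexp_fps q"
proof (rule fps_ext)
  fix n
  show "fps_qderiv q (qexp_fps q) $ n = qexp_fps q $ n"
    using qint_nonzero[OF assms, of "Suc n"] qfact_nonzero[OF assms, of n]
    by (simp add: qexp_fps_def qfact_Suc field_simps)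
qed

lemma fps_qderiv_qExp:
  assumes "q \<noteq> -1"
  shows "fps_qderiv q (qExp_fps q) = fps_dilate q (qExp_fps q)"
proof (rule fps_ext)
  fix n
  have "Suc n choose 2 = (n choose 2) + n"
    by (simp add: numeral_2_eq_2)
  then show "fps_qderiv q (qExp_fps q) $ n = fps_dilate q (qExp_fps q) $ n"
    using qint_nonzero[OF assms, of "Suc n"] qfact_nonzero[OF assms, of n]
    by (simp add: qExp_fps_def qfact_Suc power_add field_simps)
qed

lemma qexp_mult_qExp_neg:
  assumes "q \<noteq> -1"
  shows "fps_dilate x (qexp_fps q) * fps_dilate (-x) (qExp_fps q) = 1"
proof -
  define P where "P = fps_dilate x (qexp_fps q) * fps_dilate (-x) (qExp_fps q)"
  have "fps_qderiv q P = 0"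
    unfolding P_def fps_qderiv_mult fps_qderiv_dilate fps_qderiv_qexp[OF assms]
      fps_qderiv_qExp[OF assms] fps_dilate_commute[of "-x" q]
    by (simp add: algebra_simps flip: fps_const_neg)
  moreover have "P $ 0 = 1"
    by (simp add: P_def qexp_fps_def qExp_fps_def numeral_2_eq_2)
  ultimately show ?thesis
    using fps_qderiv_eq_0_imp_const[OF assms] unfolding P_def by fastforce
qed

subsection \<open>The generating function of \<open>U\<close>\<close>

definition U_fps :: "real \<Rightarrow> real \<Rightarrow> real \<Rightarrow> real fps" where
  "U_fps q x s = Abs_fps (\<lambda>n. if n = 0 then 0 else U (n - 1) x s q / qfact q n)"

definition U_qdiff_eq :: "real \<Rightarrow> real \<Rightarrow> real \<Rightarrow> real fps \<Rightarrow> bool" where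
  "U_qdiff_eq q x s f \<longleftrightarrow>
     fps_qderiv q (fps_qderiv q f) = fps_const x * fps_qderiv q f
       + fps_const x * fps_qderiv q (fps_dilate q f) + fps_const s * fps_dilate q f"

lemma U_qdiff_eq_iff:
  "U_qdiff_eq q x s f \<longleftrightarrow>
     (\<forall>n. qint q (Suc n) * qint q (Suc (Suc n)) * f $ Suc (Suc n)
          = x * qint q (Suc n) * (1 + q ^ Suc n) * f $ Suc n + s * q ^ n * f $ n)"
  by (simp add: U_qdiff_eq_def fps_eq_iff algebra_simps)

lemma U_qdiff_eq_unique:
  assumes "q \<noteq> -1" "U_qdiff_eq q x s f" "U_qdiff_eq q x s g"
    and "f $ 0 = g $ 0" "f $ 1 = g $ 1"
  shows "f = g"
proof -
  have "f $ n = g $ n \<and> f $ Suc n = g $ Suc n" for n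
  proof (induction n)
    case (Suc n)
    have "qint q (Suc n) * qint q (Suc (Suc n)) * f $ Suc (Suc n)
          = qint q (Suc n) * qint q (Suc (Suc n)) * g $ Suc (Suc n)"
      using assms(2,3) Suc by (simp add: U_qdiff_eq_iff)
    then show ?case
      using Suc qint_nonzero[OF assms(1)] by simp
  qed (use assms(4,5) in simp)
  then show ?thesis
    by (simp add: fps_eq_iff)
qed

lemma U_fps_qdiff_eq:
  assumes "q \<noteq> -1"
  shows "U_qdiff_eq q x s (U_fps q x s)"
  unfolding U_qdiff_eq_iff
proof
  fix n
  have nz: "qfact q n \<noteq> 0" "qint q (Suc n) \<noteq> 0" "qint q (Suc (Suc n)) \<noteq> 0"
    using qfact_nonzero qint_nonzero assms by auto
  show "qint q (Suc n) * qint q (Suc (Suc n)) * U_fps q x s $ Suc (Suc n)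
        = x * qint q (Suc n) * (1 + q ^ Suc n) * U_fps q x s $ Suc n + s * q ^ n * U_fps q x s $ n"
    using nz by (cases n) (simp_all add: U_fps_def qfact_Suc field_simps)
qed

definition odd_prod :: "real \<Rightarrow> real \<Rightarrow> real \<Rightarrow> nat \<Rightarrow> real" where
  "odd_prod q x s k = (\<Prod>i<k. x ^ 2 + q ^ (2 * i + 1) * s)"

definition odd_prod_fps :: "real \<Rightarrow> real \<Rightarrow> real \<Rightarrow> real fps" where
  "odd_prod_fps q x s = Abs_fps (\<lambda>n. if odd n then odd_prod q x s (n div 2) / qfact q n else 0)"

lemma fps_dilate_minus_one_odd_prod: "fps_dilate (-1) (odd_prod_fps q x s) = - odd_prod_fps q x s"
  by (rule fps_ext) (auto simp: odd_prod_fps_def)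

lemma fps_qderiv_twice_odd_prod:
  assumes "q \<noteq> -1"
  shows "fps_qderiv q (fps_qderiv q (odd_prod_fps q x s))
         = fps_const (x ^ 2) * odd_prod_fps q x s + fps_const s * fps_dilate q (odd_prod_fps q x s)"
proof (rule fps_ext)
  fix n
  have nz: "qint q (Suc n) \<noteq> 0" "qint q (Suc (Suc n)) \<noteq> 0" "qfact q n \<noteq> 0"
    using assms qint_nonzero qfact_nonzero by auto
  show "fps_qderiv q (fps_qderiv q (odd_prod_fps q x s)) $ n
        = (fps_const (x ^ 2) * odd_prod_fps q x s + fps_const s * fps_dilate q (odd_prod_fps q x s)) $ n"
  proof (cases "odd n")
    case True
    then obtain k where k: "n = 2 * k + 1"
      by (metis oddE)
    have "odd_prod q x s (Suc k) = odd_prod q x s k * (x ^ 2 + q ^ n * s)"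
      by (simp add: odd_prod_def k)
    moreover have "Suc (Suc n) div 2 = Suc k" "n div 2 = k"
      using k by auto
    ultimately show ?thesis
      using True nz by (simp add: odd_prod_fps_def qfact_Suc field_simps)
  qed (simp add: odd_prod_fps_def)
qed

text \<open>With A = D O + x O and B = D A one finds D(O E_x) = A \<cdot> \<sigma>E_x and
  D(D(O E_x)) = (B + q x A) \<cdot> \<sigma>\<sigma>E_x, where \<sigma> is dilation by q; the defect of the equation
  is then q x (A - \<sigma>A) \<cdot> \<sigma>\<sigma>E_x - B (\<sigma>E_x - \<sigma>\<sigma>E_x), which vanishes since f - \<sigma>f = (1 - q) z D f.\<close>

lemma odd_prod_mult_qExp_qdiff_eq:
  assumes "q \<noteq> -1"
  shows "U_qdiff_eq q x s (odd_prod_fps q x s * fps_dilate x (qExp_fps q))"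
proof -
  define Od where "Od = odd_prod_fps q x s"
  define E where "E = fps_dilate x (qExp_fps q)"
  define W where "W = Od * E"
  define X where "X = fps_const x"
  define Q where "Q = fps_const q"
  define S where "S = fps_const s"
  define A where "A = fps_qderiv q Od + X * Od"
  define B where "B = X * A + S * fps_dilate q Od"
  have dE: "fps_qderiv q E = X * fps_dilate q E"
    unfolding E_def X_def fps_qderiv_dilate fps_qderiv_qExp[OF assms] fps_dilate_commute ..
  have dW: "fps_qderiv q W = A * fps_dilate q E"
    unfolding W_def A_def fps_qderiv_mult dE by (simp add: algebra_simps)
  have dA: "fps_qderiv q A = B"
    unfolding A_def B_def fps_qderiv_add X_def fps_qderiv_const_mult Od_def S_def
      fps_qderiv_twice_odd_prod[OF assms]
    by (simp add: algebra_simps power2_eq_square)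
  have ddW: "fps_qderiv q (fps_qderiv q W) = (B + Q * X * A) * fps_dilate q (fps_dilate q E)"
    unfolding dW fps_qderiv_mult fps_qderiv_dilate dE dA
    by (simp add: fps_dilate_mult X_def Q_def fps_dilate_const_mult algebra_simps)
  have dsW: "fps_qderiv q (fps_dilate q W) = Q * fps_dilate q A * fps_dilate q (fps_dilate q E)"
    unfolding fps_qderiv_dilate dW Q_def by (simp add: fps_dilate_mult algebra_simps)
  have sW: "fps_dilate q W = fps_dilate q Od * fps_dilate q E"
    unfolding W_def by (rule fps_dilate_mult)
  have dfA: "A - fps_dilate q A = fps_const (1 - q) * fps_X * B"
    using fps_sub_dilate_eq_qderiv[of A q] dA by simp
  have dfE: "fps_dilate q E - fps_dilate q (fps_dilate q E)
             = fps_const (1 - q) * Q * X * fps_X * fps_dilate q (fps_dilate q E)"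
  proof -
    have "fps_qderiv q (fps_dilate q E) = Q * (X * fps_dilate q (fps_dilate q E))"
      unfolding fps_qderiv_dilate dE Q_def X_def fps_dilate_const_mult ..
    then show ?thesis
      using fps_sub_dilate_eq_qderiv[of "fps_dilate q E" q] by (simp add: algebra_simps)
  qed
  have "fps_qderiv q (fps_qderiv q W)
        - (X * fps_qderiv q W + X * fps_qderiv q (fps_dilate q W) + S * fps_dilate q W)
        = Q * X * (A - fps_dilate q A) * fps_dilate q (fps_dilate q E)
          - B * (fps_dilate q E - fps_dilate q (fps_dilate q E))"
    unfolding ddW dsW unfolding dW sW B_def by (simp add: algebra_simps)
  also have "\<dots> = 0"
    unfolding dfA dfE by (simp add: algebra_simps)
  finally show ?thesis
    unfolding U_qdiff_eq_def W_def Od_def E_def X_def S_def by simp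
qed

lemma U_fps_eq_odd_prod_mult_qExp:
  assumes "q \<noteq> -1"
  shows "U_fps q x s = odd_prod_fps q x s * fps_dilate x (qExp_fps q)"
proof (rule U_qdiff_eq_unique[OF assms U_fps_qdiff_eq[OF assms] odd_prod_mult_qExp_qdiff_eq[OF assms]])
  show "U_fps q x s $ 0 = (odd_prod_fps q x s * fps_dilate x (qExp_fps q)) $ 0"
    by (simp add: U_fps_def odd_prod_fps_def)
  show "U_fps q x s $ 1 = (odd_prod_fps q x s * fps_dilate x (qExp_fps q)) $ 1"
    by (simp add: U_fps_def odd_prod_fps_def odd_prod_def qExp_fps_def fps_mult_nth qfact_def qint_def numeral_2_eq_2)
qed

subsection \<open>Extracting the coefficients\<close>

lemma qgen_fps_mult_qexp:
  "qgen_fps q * (qexp_fps q + fps_dilate (-1) (qexp_fps q))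
   = fps_X * (qexp_fps q - fps_dilate (-1) (qexp_fps q))"
proof -
  have neg: "qexp_neg_fps q = fps_dilate (-1) (qexp_fps q)"
    by (rule fps_ext) (simp add: qexp_neg_fps_def qexp_fps_def)
  have "(qexp_fps q + qexp_neg_fps q) $ 0 \<noteq> 0"
    by (simp add: qexp_fps_def qexp_neg_fps_def)
  then have "inverse (qexp_fps q + qexp_neg_fps q) * (qexp_fps q + qexp_neg_fps q) = 1"
    by (rule inverse_mult_eq_1)
  then show ?thesis
    unfolding qgen_fps_def neg[symmetric] by (simp add: mult.assoc)
qed

lemma qgen_fps_mult_qExp:
  assumes "q \<noteq> -1"
  shows "fps_dilate x (qgen_fps q) * (fps_dilate x (qExp_fps q) + fps_dilate (-x) (qExp_fps q))
         = fps_const x * fps_X * (fps_dilate x (qExp_fps q) - fps_dilate (-x) (qExp_fps q))"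
proof -
  define e where "e = fps_dilate x (qexp_fps q)"
  define e' where "e' = fps_dilate (-x) (qexp_fps q)"
  define E where "E = fps_dilate x (qExp_fps q)"
  define E' where "E' = fps_dilate (-x) (qExp_fps q)"
  have eE': "e * E' = 1" and e'E: "e' * E = 1"
    using qexp_mult_qExp_neg[OF assms, of x] qexp_mult_qExp_neg[OF assms, of "-x"]
    by (simp_all add: e_def e'_def E_def E'_def)
  have "fps_dilate x (qgen_fps q) * (e + e') = fps_const x * fps_X * (e - e')"
    using arg_cong[OF qgen_fps_mult_qexp, of "fps_dilate x"]
    by (simp add: e_def e'_def fps_dilate_mult fps_dilate_add fps_dilate_diff fps_dilate_X
        fps_dilate_dilate)
  moreover have "(e + e') * (E * E') = E + E'" "(e - e') * (E * E') = E - E'"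
    using eE' e'E by (simp_all add: algebra_simps)
  ultimately have "fps_dilate x (qgen_fps q) * (E + E') = fps_const x * fps_X * (E - E')"
    by (metis mult.assoc)
  then show ?thesis
    by (simp add: E_def E'_def)
qed

lemma U_fps_odd_even_qgen:
  fixes q x s :: real
  assumes "q \<noteq> -1"
  defines "V \<equiv> U_fps q x s"
  shows "(V - fps_dilate (-1) V) * fps_dilate x (qgen_fps q)
         = fps_const x * fps_X * (V + fps_dilate (-1) V)"
proof -
  define Od where "Od = odd_prod_fps q x s"
  define E where "E = fps_dilate x (qExp_fps q)"
  define E' where "E' = fps_dilate (-x) (qExp_fps q)"
  have V: "V = Od * E"
    unfolding V_def Od_def E_def by (rule U_fps_eq_odd_prod_mult_qExp[OF assms(1)])
  have V': "fps_dilate (-1) V = - Od * E'"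
    unfolding V fps_dilate_mult Od_def fps_dilate_minus_one_odd_prod E_def E'_def fps_dilate_dilate
    by simp
  have "(V - fps_dilate (-1) V) * fps_dilate x (qgen_fps q)
        = Od * (fps_dilate x (qgen_fps q) * (E + E'))"
    unfolding V' unfolding V by (simp add: algebra_simps)
  also have "\<dots> = fps_const x * fps_X * (V + fps_dilate (-1) V)"
    unfolding E_def E'_def qgen_fps_mult_qExp[OF assms(1)] V' unfolding V E_def E'_def
    by (simp add: algebra_simps)
  finally show ?thesis .
qed

lemma U_odd_div_qfact_eq_sum:
  fixes q x s :: real
  assumes "q \<noteq> -1" "x \<noteq> 0"
  shows "U (2*n+1) x s q / qfact q (2*n+2) =
    (\<Sum>k=0..n. U (2*k) x s q / qfact q (2*k+1) * x ^ (2*n+1-2*k) * qgen_fps q $ (2*n+2-2*k))"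
proof -
  define V where "V = U_fps q x s"
  define T where "T = qgen_fps q"
  define t where "t k = V $ (2*k+1) * x ^ (2*n+1-2*k) * T $ (2*n+2-2*k)" for k
  have "2 * x * V $ (2*n+2) = (fps_const x * fps_X * (V + fps_dilate (-1) V)) $ (2*n+3)"
    by (simp add: mult.assoc)
  also have "\<dots> = ((V - fps_dilate (-1) V) * fps_dilate x T) $ (2*n+3)"
    using U_fps_odd_even_qgen[OF assms(1)] by (simp add: V_def T_def)
  also have "\<dots> = (\<Sum>i<2*(n+2). if even i then 0 else 2 * V $ i * (x ^ (2*n+3-i) * T $ (2*n+3-i)))"
  proof -
    have "{0..2*n+3} = {..<2*(n+2)}"
      by auto
    then show ?thesis
      unfolding fps_mult_nth by (intro sum.cong) auto
  qed
  also have "\<dots> = (\<Sum>k<n+2. 2 * V $ (2*k+1) * (x ^ (2*n+2-2*k) * T $ (2*n+2-2*k)))"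
    using sum_split_even_odd[of "\<lambda>_. 0"] by simp
  also have "\<dots> = (\<Sum>k<n+1. 2 * x * t k)"
  proof -
    have "T $ 0 = 0"
      by (simp add: T_def qgen_fps_def)
    moreover have "x ^ (2*n+2-2*k) = x * x ^ (2*n+1-2*k)" if "k < n+1" for k
      using that by (simp flip: power_Suc add: Suc_diff_le)
    ultimately show ?thesis
      by (simp add: t_def mult_ac)
  qed
  finally have "V $ (2*n+2) = (\<Sum>k=0..n. t k)"
    using assms(2) by (simp add: atLeast0AtMost lessThan_Suc_atMost flip: sum_distrib_left)
  then show ?thesis
    by (simp add: V_def T_def t_def U_fps_def)
qed

lemma qgen_fps_nth_even:
  assumes "q \<noteq> -1"
  shows "qgen_fps q $ (2 * Suc m)
         = (-1) ^ m * qgenocchi q (2 * Suc m) * qpoch (-q) q (2 * m + 1) / qfact q (2 * Suc m)"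
proof -
  define c where "c = (-1) ^ m * qpoch (-q) q (2 * m + 1) / qfact q (2 * Suc m)"
  have "c \<noteq> 0"
    unfolding c_def using qpoch_neg_nonzero[OF assms] qfact_nonzero[OF assms] by simp
  have "qgenocchi q (2 * Suc m) = (THE g. qgen_fps q $ (2 * Suc m) = g * c)"
    by (simp add: qgenocchi_def c_def field_simps)
  also have "\<dots> = qgen_fps q $ (2 * Suc m) / c"
    using \<open>c \<noteq> 0\<close> by (intro the_equality) auto
  finally show ?thesis
    using \<open>c \<noteq> 0\<close> by (simp add: c_def field_simps)
qed

lemma qfact_div_mult_qgen_fps_nth:
  assumes "q \<noteq> -1" "k \<le> n"
  shows "qfact q (2*n+2) / qfact q (2*k+1) * qgen_fps q $ (2*n+2-2*k)
         = qbinom q (2*n+2) (2*k) * (1 / qint q (2*k+1))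
           * qpoch (-q) q (2*n-2*k+1) * (-1) ^ (n-k) * qgenocchi q (2*n-2*k+2)"
proof -
  have idx: "2*n+2-2*k = 2 * Suc (n-k)" "2*n-2*k+2 = 2 * Suc (n-k)" "2*n-2*k+1 = 2*(n-k)+1"
    using assms(2) by auto
  have "qfact q (2*k) \<noteq> 0" "qint q (2*k+1) \<noteq> 0" "qfact q (2 * Suc (n-k)) \<noteq> 0"
    using qfact_nonzero[OF assms(1)] qint_nonzero[OF assms(1)] by auto
  moreover have "qfact q (2*k+1) = qfact q (2*k) * qint q (2*k+1)"
    using qfact_Suc[of q "2*k"] by simp
  moreover have "(-1::real) ^ (n-k) * (-1) ^ (n-k) = 1"
    by (simp flip: power_mult_distrib)
  ultimately show ?thesis
    unfolding idx qgen_fps_nth_even[OF assms(1)] qbinom_def by (simp add: field_simps)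
qed

lemma U_odd_at_0: "U (2 * n + 1) 0 s q = 0"
  by (induction n) (simp_all add: numeral_2_eq_2)

theorem theorem3p3:
  fixes q x s :: real and n :: nat
  assumes "q \<noteq> -1"
  shows "U (2*n+1) x s q =
    (\<Sum>k=0..n. qbinom q (2*n+2) (2*k) * (1 / qint q (2*k+1))
        * qpoch (-q) q (2*n-2*k+1) * (-1) ^ (n-k) * qgenocchi q (2*n-2*k+2)
        * x ^ (2*n+1-2*k) * U (2*k) x s q)"
proof (cases "x = 0")
  case True
  have "\<forall>k\<in>{0..n}. (0::real) ^ (2*n+1-2*k) = 0"
    by auto
  then show ?thesis
    unfolding True U_odd_at_0 by (intro sum.neutral[symmetric] ballI) simp
next
  case False
  have "U (2*n+1) x s q = qfact q (2*n+2) *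
    (\<Sum>k=0..n. U (2*k) x s q / qfact q (2*k+1) * x ^ (2*n+1-2*k) * qgen_fps q $ (2*n+2-2*k))"
    using U_odd_div_qfact_eq_sum[OF assms False] qfact_nonzero[OF assms] by (simp add: field_simps)
  also have "\<dots> = (\<Sum>k=0..n. qfact q (2*n+2) / qfact q (2*k+1) * qgen_fps q $ (2*n+2-2*k)
                              * x ^ (2*n+1-2*k) * U (2*k) x s q)"
    by (simp add: sum_distrib_left mult_ac)
  finally show ?thesis
    by (rule trans) (intro sum.cong refl,
        simp only: atLeastAtMost_iff qfact_div_mult_qgen_fps_nth[OF assms])
qed

end
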